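(* In the curved-exam game described in the context, for every student $i$, every $x_i\in(\alpha_i,1]$ and every opponent profile $x_{-i}\in[0,1]^{n-1}$, we have $U_i(\alpha_i,x_{-i})>U_i(x_i,x_{-i})$; that is, every strategy in $(\alpha_i,1]$ is strictly dominated by $\alpha_i$.
   Context: The curved-exam game: fix $n\ge2$, abilities $\alpha_1,\dots,\alpha_n\in(0,1)$, target mean $m\in(0,1)$. Student $i$ chooses $x_i\in[0,1]$; $\bar x=\frac1n\sum_j x_j$, $\bar x_{-i}=\frac1{n-1}\sum_{j\ne i}x_j$. Grade $G_i(x)=x_i+\max(m-\bar x,0)=\max\big(m+\frac{n-1}{n}(x_i-\bar x_{-i}),x_i\big)$ (not truncated at 1); payoff $U_i(x)=G_i(x)^{\alpha_i}(1-x_i)^{1-\alpha_i}$. *)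

theory Defs
  imports Complex_Main
begin

(* Students are indexed by {0..<n}; a strategy profile is x :: nat => real,
   only the values x j for j < n are relevant. *)

definition mean_score :: "nat \<Rightarrow> (nat \<Rightarrow> real) \<Rightarrow> real" where
  "mean_score n x = (\<Sum>j<n. x j) / real n"

definition grade :: "nat \<Rightarrow> real \<Rightarrow> (nat \<Rightarrow> real) \<Rightarrow> nat \<Rightarrow> real" where
  "grade n m x i = x i + max (m - mean_score n x) 0"

definition payoff :: "nat \<Rightarrow> real \<Rightarrow> (nat \<Rightarrow> real) \<Rightarrow> (nat \<Rightarrow> real) \<Rightarrow> nat \<Rightarrow> real" where
  "payoff n m \<alpha> x i = (grade n m x i) powr (\<alpha> i) * (1 - x i) powr (1 - \<alpha> i)"

end

theory Submission
  imports Defs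
begin

text \<open>Raising one's own score from \<open>\<alpha>\<^sub>i\<close> to \<open>t\<close> raises the class mean, so the curve
  bonus can only shrink: the grade grows by at most \<open>d = t - \<alpha>\<^sub>i\<close>, while the leisure
  \<open>1 - x\<^sub>i\<close> drops by exactly \<open>d\<close>. At leisure \<open>1 - \<alpha>\<^sub>i\<close> and grade \<open>g \<ge> \<alpha>\<^sub>i\<close> the
  Cobb-Douglas payoff values grade no more than leisure at the margin, so this one-for-one
  trade cannot pay off; strict concavity of the logarithm makes the loss strict.\<close>

lemma sum_fun_upd_shift:
  fixes f :: "'a \<Rightarrow> 'b::ab_group_add"
  assumes "finite A" "i \<in> A"
  shows "sum (f(i := t)) A = sum (f(i := s)) A + (t - s)"
proof -
  have "f(i := t) = (\<lambda>j. (f(i := s)) j + (if j = i then t - s else 0))"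
    by auto
  then show ?thesis
    using assms by (simp add: sum.distrib)
qed

lemma mean_score_fun_upd:
  assumes "i < n"
  shows "mean_score n (x(i := t)) = mean_score n (x(i := s)) + (t - s) / real n"
  using sum_fun_upd_shift[of "{..<n}" i x t s] assms
  by (simp add: mean_score_def add_divide_distrib diff_divide_distrib)

lemma grade_fun_upd_le:
  assumes "i < n" "s \<le> t"
  shows "grade n m (x(i := t)) i \<le> grade n m (x(i := s)) i + (t - s)"
proof -
  have "mean_score n (x(i := s)) \<le> mean_score n (x(i := t))"
    using mean_score_fun_upd[OF \<open>i < n\<close>, of x t s] \<open>s \<le> t\<close> by simp
  then show ?thesis
    unfolding grade_def by simp
qed

lemma cobb_douglas_trade_loss:
  fixes a g d :: real
  assumes a: "0 < a" "a < 1" and g: "a \<le> g" and d: "0 < d" "d \<le> 1 - a"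
  shows "(g + d) powr a * (1 - a - d) powr (1 - a) < g powr a * (1 - a) powr (1 - a)"
proof (cases "d = 1 - a")
  case True
  then show ?thesis
    using a g by simp
next
  case False
  have "g > 0" "1 - a - d > 0"
    using a g d False by auto
  have grade_gain: "ln (g + d) - ln g < d / g"
  proof -
    have "1 + d / g = (g + d) / g"
      using \<open>g > 0\<close> by (simp add: field_simps)
    then show ?thesis
      using ln_add_one_self_less_self[of "d / g"] \<open>g > 0\<close> d by (simp add: ln_div)
  qed
  have leisure_loss: "ln (1 - a - d) - ln (1 - a) \<le> - d / (1 - a)"
  proof -
    have "(1 - a - d) / (1 - a) - 1 = - d / (1 - a)"
      using a by (simp add: field_simps)
    then show ?thesis
      using ln_le_minus_one[of "(1 - a - d) / (1 - a)"] \<open>1 - a - d > 0\<close> a by (simp add: ln_div)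
  qed
  have "a * (ln (g + d) - ln g) < d"
  proof -
    have "a * (ln (g + d) - ln g) < a * (d / g)"
      using grade_gain a(1) by (rule mult_strict_left_mono)
    also have "\<dots> \<le> d"
      using g d \<open>g > 0\<close> by (simp add: divide_le_eq mult.commute mult_left_mono)
    finally show ?thesis .
  qed
  moreover have "(1 - a) * (ln (1 - a - d) - ln (1 - a)) \<le> - d"
    using mult_left_mono[OF leisure_loss, of "1 - a"] a by simp
  ultimately have "a * ln (g + d) + (1 - a) * ln (1 - a - d) < a * ln g + (1 - a) * ln (1 - a)"
    by (simp add: algebra_simps)
  then show ?thesis
    using \<open>g > 0\<close> d \<open>1 - a - d > 0\<close> a by (simp add: powr_def flip: exp_add)
qed

theorem mainTheorem5:
  fixes n :: nat and m :: real and \<alpha> :: "nat \<Rightarrow> real" and x :: "nat \<Rightarrow> real" and i :: nat and t :: real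
  assumes "n \<ge> 2"
    and "\<forall>j<n. 0 < \<alpha> j \<and> \<alpha> j < 1"
    and "0 < m" and "m < 1"
    and "i < n"
    and "\<forall>j<n. j \<noteq> i \<longrightarrow> 0 \<le> x j \<and> x j \<le> 1"
    and "\<alpha> i < t" and "t \<le> 1"
  shows "payoff n m \<alpha> (x(i := \<alpha> i)) i > payoff n m \<alpha> (x(i := t)) i"
proof -
  define a where "a = \<alpha> i"
  define g where "g = grade n m (x(i := a)) i"
  have a: "0 < a" "a < 1"
    using assms(2,5) by (auto simp: a_def)
  have "a \<le> g"
    by (simp add: g_def grade_def)
  have "0 \<le> grade n m (x(i := t)) i"
    using a \<open>\<alpha> i < t\<close> by (simp add: grade_def a_def)
  moreover have "grade n m (x(i := t)) i \<le> g + (t - a)"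
    using grade_fun_upd_le[OF \<open>i < n\<close>] \<open>\<alpha> i < t\<close> by (simp add: g_def a_def)
  ultimately have "payoff n m \<alpha> (x(i := t)) i \<le> (g + (t - a)) powr a * (1 - a - (t - a)) powr (1 - a)"
    unfolding payoff_def using a by (auto simp: a_def intro!: mult_right_mono powr_mono2)
  also have "\<dots> < g powr a * (1 - a) powr (1 - a)"
    using cobb_douglas_trade_loss[OF a \<open>a \<le> g\<close>, of "t - a"] assms(7,8) by (simp add: a_def)
  also have "\<dots> = payoff n m \<alpha> (x(i := \<alpha> i)) i"
    by (simp add: payoff_def g_def a_def)
  finally show ?thesis .
qed

end
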